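(* Let $X$ be a uniformly locally finite metric space, $\sigma$ an automorphism of $\mathrm{C}^*_u(X)$, and $f\colon X\to X$ a map such that \[ \inf_{x\in X}\|\sigma(e_{xx})\delta_{f(x)}\|>0. \] Suppose that for every $A\subseteq X$ there is a unitary $u\in\mathrm{C}^*_u(X)$ with $\sigma(p_A)=up_Au^*$. Then $f$ is close to the identity, i.e. $\sup_{x\in X}d(x,f(x))<\infty$.
   Context: Uniformly locally finite: $\sup_x|B_r(x)|<\infty$ for all $r>0$. $(\delta_x)$ canonical basis of $\ell_2(X)$; $e_{xx}$ is the rank-one orthogonal projection onto $\mathbb{C}\delta_x$; $p_A$ is the orthogonal projection onto $\ell_2(A)$. A partial translation is a bijection $f\colon\mathrm{dom}(f)\subseteq X\to\mathrm{ran}(f)\subseteq X$ with $\sup_{x}d(x,f(x))<\infty$; $v_f\delta_x=\delta_{f(x)}$ on $\mathrm{dom}(f)$, $0$ elsewhere; $\mathrm{C}^*_u(X)$ is the $\mathrm{C}^*$-algebra generated by all $v_f$. *)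

theory Defs
  imports "HOL-Analysis.Analysis"
begin

text \<open>The metric space X is the universe of a type 'a of class metric_space.
Operators on l2(X) are represented by their matrices
T x y = <delta_x, T delta_y>.\<close>

definition unif_locally_finite :: "'a::metric_space itself \<Rightarrow> bool" where
  "unif_locally_finite _ \<longleftrightarrow>
     (\<forall>r>0. \<exists>N::nat. \<forall>x::'a. finite (cball x r) \<and> card (cball x r) \<le> N)"

type_synonym 'a mat = "'a \<Rightarrow> 'a \<Rightarrow> complex"

definition l2norm :: "('a \<Rightarrow> complex) \<Rightarrow> real" where
  "l2norm v = sqrt (infsum (\<lambda>x. (cmod (v x))^2) UNIV)"

definition fin_supp :: "('a \<Rightarrow> complex) \<Rightarrow> bool" where
  "fin_supp v \<longleftrightarrow> finite {y. v y \<noteq> 0}"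

definition mvec :: "'a mat \<Rightarrow> ('a \<Rightarrow> complex) \<Rightarrow> ('a \<Rightarrow> complex)" where
  "mvec T v = (\<lambda>x. \<Sum>y\<in>{y. v y \<noteq> 0}. T x y * v y)"

text \<open>A matrix defines a bounded operator on l2(X) iff its action on finitely
supported vectors is l2-valued and bounded.\<close>
definition bounded_op :: "'a mat \<Rightarrow> bool" where
  "bounded_op T \<longleftrightarrow> (\<exists>C. \<forall>v. fin_supp v \<longrightarrow>
      (\<lambda>x. (cmod (mvec T v x))^2) summable_on UNIV \<and> l2norm (mvec T v) \<le> C * l2norm v)"

definition opnorm :: "'a mat \<Rightarrow> real" where
  "opnorm T = Sup {l2norm (mvec T v) | v. fin_supp v \<and> l2norm v \<le> 1}"

definition madd :: "'a mat \<Rightarrow> 'a mat \<Rightarrow> 'a mat" where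
  "madd S T = (\<lambda>x y. S x y + T x y)"

definition msmul :: "complex \<Rightarrow> 'a mat \<Rightarrow> 'a mat" where
  "msmul c T = (\<lambda>x y. c * T x y)"

definition mdiff :: "'a mat \<Rightarrow> 'a mat \<Rightarrow> 'a mat" where
  "mdiff S T = (\<lambda>x y. S x y - T x y)"

definition mmul :: "'a mat \<Rightarrow> 'a mat \<Rightarrow> 'a mat" where
  "mmul S T = (\<lambda>x y. infsum (\<lambda>z. S x z * T z y) UNIV)"

definition madj :: "'a mat \<Rightarrow> 'a mat" where
  "madj T = (\<lambda>x y. cnj (T y x))"

definition mid :: "'a mat" where
  "mid = (\<lambda>x y. if x = y then 1 else 0)"

definition vmat :: "'a set \<Rightarrow> ('a \<Rightarrow> 'a) \<Rightarrow> 'a mat" where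
  "vmat D g = (\<lambda>x y. if y \<in> D \<and> x = g y then 1 else 0)"

definition partial_translation :: "'a::metric_space set \<Rightarrow> ('a \<Rightarrow> 'a) \<Rightarrow> bool" where
  "partial_translation D g \<longleftrightarrow> inj_on g D \<and> (\<exists>C. \<forall>x\<in>D. dist x (g x) \<le> C)"

definition exx :: "'a \<Rightarrow> 'a mat" where
  "exx a = (\<lambda>x y. if x = a \<and> y = a then 1 else 0)"

definition proj :: "'a set \<Rightarrow> 'a mat" where
  "proj A = (\<lambda>x y. if x = y \<and> x \<in> A then 1 else 0)"

inductive_set uroe :: "('a::metric_space) mat set" where
  gen: "partial_translation D g \<Longrightarrow> vmat D g \<in> uroe"
| add: "S \<in> uroe \<Longrightarrow> T \<in> uroe \<Longrightarrow> madd S T \<in> uroe"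
| smul: "T \<in> uroe \<Longrightarrow> msmul c T \<in> uroe"
| mult: "S \<in> uroe \<Longrightarrow> T \<in> uroe \<Longrightarrow> mmul S T \<in> uroe"
| adj: "T \<in> uroe \<Longrightarrow> madj T \<in> uroe"
| lim: "(\<And>n::nat. T n \<in> uroe) \<Longrightarrow> bounded_op S \<Longrightarrow>
        (\<lambda>n. opnorm (mdiff (T n) S)) \<longlonglongrightarrow> 0 \<Longrightarrow> S \<in> uroe"

definition uroe_automorphism :: "('a::metric_space mat \<Rightarrow> 'a mat) \<Rightarrow> bool" where
  "uroe_automorphism \<sigma> \<longleftrightarrow> bij_betw \<sigma> uroe uroe \<and>
     (\<forall>S\<in>uroe. \<forall>T\<in>uroe. \<sigma> (madd S T) = madd (\<sigma> S) (\<sigma> T)) \<and>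
     (\<forall>c. \<forall>T\<in>uroe. \<sigma> (msmul c T) = msmul c (\<sigma> T)) \<and>
     (\<forall>S\<in>uroe. \<forall>T\<in>uroe. \<sigma> (mmul S T) = mmul (\<sigma> S) (\<sigma> T)) \<and>
     (\<forall>T\<in>uroe. \<sigma> (madj T) = madj (\<sigma> T))"

definition unitary :: "'a mat \<Rightarrow> bool" where
  "unitary u \<longleftrightarrow> mmul u (madj u) = mid \<and> mmul (madj u) u = mid"

end

theory Submission
  imports Defs
begin

(* Every element of the uniform Roe algebra has rows and columns whose l2-mass far from the
   diagonal is uniformly small: this holds for the generators v_f and survives sums, adjoints,
   products (by uniform local finiteness) and norm limits.  The weight |sigma(p_B) delta_y|^2 is
   additive in B and at most 1, so the hypothesis |sigma(e_xx) delta_f(x)| >= eps forces f to have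
   finite fibres.  If f were not close to the identity, finite fibres and finite balls would allow
   choosing A with points x in A whose image f(x) is arbitrarily far from all of A.  Then
   |sigma(p_A) delta_f(x)|^2 >= eps^2, while sigma(p_A) = u p_A u^* turns this weight into
   sum_{w in A} |u(f(x), w)|^2, which is small by the decay of the rows of u. *)

section \<open>Sums of squares over finite sections\<close>

definition sqnorm_on :: "'b set \<Rightarrow> ('b \<Rightarrow> complex) \<Rightarrow> real" where
  "sqnorm_on F v = (\<Sum>z\<in>F. (cmod (v z))^2)"

lemma sqnorm_on_nonneg: "0 \<le> sqnorm_on F v"
  unfolding sqnorm_on_def by (simp add: sum_nonneg)

lemma sqrt_sqnorm_on: "sqrt (sqnorm_on F v) = L2_set (\<lambda>z. cmod (v z)) F"
  unfolding L2_set_def sqnorm_on_def by simp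

lemma sqnorm_on_cnj [simp]: "sqnorm_on F (\<lambda>z. cnj (v z)) = sqnorm_on F v"
  unfolding sqnorm_on_def by simp

lemma sqnorm_on_mult: "sqnorm_on F (\<lambda>z. c * v z) = (cmod c)^2 * sqnorm_on F v"
  unfolding sqnorm_on_def by (simp add: sum_distrib_left norm_mult power_mult_distrib)

lemma sqnorm_on_add_le: "sqnorm_on F (\<lambda>z. v z + w z) \<le> 2 * sqnorm_on F v + 2 * sqnorm_on F w"
proof -
  have "(cmod (a + b))^2 \<le> 2 * (cmod a)^2 + 2 * (cmod b)^2" for a b :: complex
  proof -
    have "(cmod (a + b))^2 \<le> (cmod a + cmod b)^2"
      by (rule power_mono[OF norm_triangle_ineq]) simp
    also have "\<dots> \<le> 2 * (cmod a)^2 + 2 * (cmod b)^2"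
      using zero_le_power2[of "cmod a - cmod b"] by (simp add: power2_eq_square algebra_simps)
    finally show ?thesis .
  qed
  then show ?thesis
    unfolding sqnorm_on_def by (simp add: sum_distrib_left sum.distrib[symmetric] sum_mono)
qed

lemma cnj_mult_self: "cnj a * a = complex_of_real ((cmod a)^2)"
  by (metis complex_norm_square mult.commute of_real_power)

lemma sum_cnj_mult_self: "(\<Sum>z\<in>F. cnj (v z) * v z) = complex_of_real (sqnorm_on F v)"
  unfolding sqnorm_on_def of_real_sum by (intro sum.cong refl) (rule cnj_mult_self)

lemma cauchy_schwarz_on:
  "cmod (\<Sum>z\<in>F. p z * q z) \<le> sqrt (sqnorm_on F p) * sqrt (sqnorm_on F q)"
proof -
  have "cmod (\<Sum>z\<in>F. p z * q z) \<le> (\<Sum>z\<in>F. cmod (p z * q z))"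
    by (rule norm_sum)
  also have "\<dots> = (\<Sum>z\<in>F. \<bar>cmod (p z)\<bar> * \<bar>cmod (q z)\<bar>)"
    by (simp add: norm_mult)
  also have "\<dots> \<le> L2_set (\<lambda>z. cmod (p z)) F * L2_set (\<lambda>z. cmod (q z)) F"
    by (rule L2_set_mult_ineq)
  finally show ?thesis by (simp add: sqrt_sqnorm_on)
qed

lemma sqrt_le_imp_le_sq:
  fixes s K :: real
  assumes "0 \<le> s" and "s \<le> K * sqrt s"
  shows "s \<le> K^2"
proof (cases "s = 0")
  case False
  with assms have "sqrt s * sqrt s \<le> sqrt s * K" and "0 < sqrt s"
    by (simp_all add: algebra_simps)
  then have "sqrt s \<le> K" by (rule mult_left_le_imp_le)
  then have "(sqrt s)^2 \<le> K^2" by (rule power_mono) (use assms(1) in simp)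
  with assms(1) show ?thesis by simp
qed (use assms in simp)

lemma bounded_nonneg_summable_on:
  fixes g :: "'b \<Rightarrow> real"
  assumes "\<And>z. 0 \<le> g z" and "\<And>F. finite F \<Longrightarrow> sum g F \<le> B"
  shows "g summable_on UNIV" and "infsum g UNIV \<le> B"
proof -
  have "bdd_above (sum g ` {F. F \<subseteq> UNIV \<and> finite F})"
    using assms(2) by (auto intro!: bdd_aboveI)
  then show summ: "g summable_on UNIV"
    using assms(1) by (intro nonneg_bdd_above_summable_on) auto
  show "infsum g UNIV \<le> B"
    using summ by (rule infsum_le_finite_sums) (rule assms(2))
qed

lemma cauchy_schwarz_infsum:
  fixes a b :: "'b \<Rightarrow> complex"
  assumes "\<And>F. finite F \<Longrightarrow> sqnorm_on F a \<le> A" and "\<And>F. finite F \<Longrightarrow> sqnorm_on F b \<le> B"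
  shows "(\<lambda>z. a z * b z) summable_on UNIV"
    and "cmod (infsum (\<lambda>z. a z * b z) UNIV) \<le> sqrt A * sqrt B"
proof -
  have "0 \<le> A" using assms(1)[of "{}"] by (simp add: sqnorm_on_def)
  have fin: "sum (\<lambda>z. norm (a z * b z)) F \<le> sqrt A * sqrt B" if "finite F" for F
  proof -
    have "sum (\<lambda>z. norm (a z * b z)) F = (\<Sum>z\<in>F. \<bar>cmod (a z)\<bar> * \<bar>cmod (b z)\<bar>)"
      by (simp add: norm_mult)
    also have "\<dots> \<le> L2_set (\<lambda>z. cmod (a z)) F * L2_set (\<lambda>z. cmod (b z)) F"
      by (rule L2_set_mult_ineq)
    also have "\<dots> \<le> sqrt A * sqrt B"
      unfolding sqrt_sqnorm_on[symmetric] using assms that \<open>0 \<le> A\<close>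
      by (intro mult_mono real_sqrt_le_mono) (auto simp: sqnorm_on_nonneg)
    finally show ?thesis .
  qed
  have abs_summ: "(\<lambda>z. norm (a z * b z)) summable_on UNIV"
    and abs_le: "infsum (\<lambda>z. norm (a z * b z)) UNIV \<le> sqrt A * sqrt B"
    using bounded_nonneg_summable_on[where B = "sqrt A * sqrt B", OF _ fin] by simp_all
  from abs_summ show "(\<lambda>z. a z * b z) summable_on UNIV"
    by (rule abs_summable_summable)
  have "cmod (infsum (\<lambda>z. a z * b z) UNIV) \<le> infsum (\<lambda>z. norm (a z * b z)) UNIV"
    using abs_summ by (rule norm_infsum_bound)
  with abs_le show "cmod (infsum (\<lambda>z. a z * b z) UNIV) \<le> sqrt A * sqrt B" by simp
qed

lemma infsum_linear_combination:
  fixes f :: "'b \<Rightarrow> 'c \<Rightarrow> complex"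
  assumes "finite Y" and "\<And>y. y \<in> Y \<Longrightarrow> f y summable_on UNIV"
  shows "(\<lambda>z. \<Sum>y\<in>Y. c y * f y z) summable_on UNIV \<and>
    infsum (\<lambda>z. \<Sum>y\<in>Y. c y * f y z) UNIV = (\<Sum>y\<in>Y. c y * infsum (f y) UNIV)"
  using assms
proof (induction Y rule: finite_induct)
  case (insert y Y)
  then have "f y summable_on UNIV" and "(\<lambda>z. \<Sum>y\<in>Y. c y * f y z) summable_on UNIV \<and>
    infsum (\<lambda>z. \<Sum>y\<in>Y. c y * f y z) UNIV = (\<Sum>y\<in>Y. c y * infsum (f y) UNIV)"
    by simp_all
  with insert.hyps show ?case
    by (simp add: summable_on_add summable_on_cmult_right infsum_add infsum_cmult_right)
qed simp

lemma infsum_complex_of_real: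
  "infsum (\<lambda>x. complex_of_real (f x)) A = complex_of_real (infsum f A)"
proof (cases "f summable_on A")
  case True
  then show ?thesis by (intro infsumI has_sum_of_real) simp
next
  case False
  have "\<not> (\<lambda>x. complex_of_real (f x)) summable_on A"
  proof
    assume "(\<lambda>x. complex_of_real (f x)) summable_on A"
    then have "(\<lambda>x. Re (complex_of_real (f x))) summable_on A" by (rule summable_on_Re)
    with False show False by simp
  qed
  with False show ?thesis by (simp add: infsum_not_exists)
qed

lemma infsum_finite_support:
  fixes f :: "'b \<Rightarrow> 'c::{comm_monoid_add,t2_space}"
  assumes "finite F" and "\<And>z. z \<notin> F \<Longrightarrow> f z = 0"
  shows "infsum f UNIV = sum f F"
proof -
  have "infsum f UNIV = infsum f F"
    by (rule infsum_cong_neutral) (use assms in auto)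
  with assms(1) show ?thesis by simp
qed

section \<open>Matrices bounded on finite sections\<close>

text \<open>\<open>mat_bound T c\<close> expresses \<open>\<parallel>T\<parallel> \<le> c\<close> through the bilinear form on finitely supported
  vectors; it presupposes no summability and is symmetric under transposition.\<close>

definition mat_bound :: "'a mat \<Rightarrow> real \<Rightarrow> bool" where
  "mat_bound T c \<longleftrightarrow> 0 \<le> c \<and> (\<forall>X Y (w::'a \<Rightarrow> complex) v. finite X \<longrightarrow> finite Y \<longrightarrow>
     cmod (\<Sum>x\<in>X. \<Sum>y\<in>Y. w x * T x y * v y) \<le> c * sqrt (sqnorm_on X w) * sqrt (sqnorm_on Y v))"

lemma mat_bound_nonneg: "mat_bound T c \<Longrightarrow> 0 \<le> c"
  unfolding mat_bound_def by blast

lemma mat_boundD: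
  "mat_bound T c \<Longrightarrow> finite X \<Longrightarrow> finite Y \<Longrightarrow>
     cmod (\<Sum>x\<in>X. \<Sum>y\<in>Y. w x * T x y * v y) \<le> c * sqrt (sqnorm_on X w) * sqrt (sqnorm_on Y v)"
  unfolding mat_bound_def by blast

lemma mat_bound_sections:
  assumes "mat_bound T c" and "finite X" and "finite Y"
  shows "sqnorm_on X (\<lambda>x. \<Sum>y\<in>Y. T x y * v y) \<le> c^2 * sqnorm_on Y v"
proof -
  define b where "b = (\<lambda>x. \<Sum>y\<in>Y. T x y * v y)"
  have "(\<Sum>x\<in>X. \<Sum>y\<in>Y. cnj (b x) * T x y * v y) = (\<Sum>x\<in>X. cnj (b x) * b x)"
    by (simp add: b_def sum_distrib_left mult.assoc)
  also have "\<dots> = complex_of_real (sqnorm_on X b)"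
    by (rule sum_cnj_mult_self)
  finally have "sqnorm_on X b \<le> c * sqrt (sqnorm_on X b) * sqrt (sqnorm_on Y v)"
    using mat_boundD[OF assms, of "\<lambda>x. cnj (b x)" v] by (simp add: sqnorm_on_nonneg)
  then have "sqnorm_on X b \<le> (c * sqrt (sqnorm_on Y v))^2"
    by (intro sqrt_le_imp_le_sq sqnorm_on_nonneg) (simp only: mult_ac)
  then show ?thesis
    unfolding b_def by (simp add: power_mult_distrib sqnorm_on_nonneg)
qed

lemma mat_boundI_sections:
  assumes "0 \<le> c"
    and "\<And>X Y v. finite X \<Longrightarrow> finite Y \<Longrightarrow>
      sqnorm_on X (\<lambda>x. \<Sum>y\<in>Y. T x y * v y) \<le> c^2 * sqnorm_on Y v"
  shows "mat_bound T c"
  unfolding mat_bound_def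
proof (intro conjI allI impI assms(1))
  fix X Y :: "'a set" and w v :: "'a \<Rightarrow> complex"
  assume fin: "finite X" "finite Y"
  define b where "b = (\<lambda>x. \<Sum>y\<in>Y. T x y * v y)"
  have "sqrt (sqnorm_on X b) \<le> sqrt (c^2 * sqnorm_on Y v)"
    unfolding b_def using assms(2)[OF fin] by (rule real_sqrt_le_mono)
  also have "\<dots> = c * sqrt (sqnorm_on Y v)"
    using assms(1) by (simp add: real_sqrt_mult)
  finally have "sqrt (sqnorm_on X w) * sqrt (sqnorm_on X b)
      \<le> sqrt (sqnorm_on X w) * (c * sqrt (sqnorm_on Y v))"
    by (rule mult_left_mono) (simp add: sqnorm_on_nonneg)
  moreover have "(\<Sum>x\<in>X. \<Sum>y\<in>Y. w x * T x y * v y) = (\<Sum>x\<in>X. w x * b x)"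
    unfolding b_def by (simp add: sum_distrib_left mult.assoc)
  ultimately show "cmod (\<Sum>x\<in>X. \<Sum>y\<in>Y. w x * T x y * v y)
      \<le> c * sqrt (sqnorm_on X w) * sqrt (sqnorm_on Y v)"
    using cauchy_schwarz_on[of w b X] by (simp add: mult_ac)
qed

lemma mat_bound_transpose:
  assumes "mat_bound T c"
  shows "mat_bound (\<lambda>x y. T y x) c"
  unfolding mat_bound_def
proof (intro conjI allI impI mat_bound_nonneg[OF assms])
  fix X Y :: "'a set" and w v :: "'a \<Rightarrow> complex"
  assume "finite X" "finite Y"
  have "(\<Sum>x\<in>X. \<Sum>y\<in>Y. w x * T y x * v y) = (\<Sum>y\<in>Y. \<Sum>x\<in>X. v y * T y x * w x)"
    by (subst sum.swap) (simp add: mult_ac)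
  with mat_boundD[OF assms \<open>finite Y\<close> \<open>finite X\<close>, of v w]
  show "cmod (\<Sum>x\<in>X. \<Sum>y\<in>Y. w x * T y x * v y) \<le> c * sqrt (sqnorm_on X w) * sqrt (sqnorm_on Y v)"
    by (simp only: mult_ac)
qed

lemma mat_bound_madj:
  assumes "mat_bound T c"
  shows "mat_bound (madj T) c"
  unfolding mat_bound_def
proof (intro conjI allI impI mat_bound_nonneg[OF assms])
  fix X Y :: "'a set" and w v :: "'a \<Rightarrow> complex"
  assume "finite X" "finite Y"
  have "(\<Sum>x\<in>X. \<Sum>y\<in>Y. w x * madj T x y * v y)
      = cnj (\<Sum>y\<in>Y. \<Sum>x\<in>X. cnj (v y) * T y x * cnj (w x))"
    unfolding madj_def by (subst sum.swap) (simp add: mult_ac)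
  with mat_boundD[OF assms \<open>finite Y\<close> \<open>finite X\<close>, of "\<lambda>y. cnj (v y)" "\<lambda>x. cnj (w x)"]
  show "cmod (\<Sum>x\<in>X. \<Sum>y\<in>Y. w x * madj T x y * v y) \<le> c * sqrt (sqnorm_on X w) * sqrt (sqnorm_on Y v)"
    by (simp only: complex_mod_cnj sqnorm_on_cnj mult_ac)
qed

lemma mat_bound_col:
  assumes "mat_bound T c" and "finite X"
  shows "sqnorm_on X (\<lambda>x. T x y) \<le> c^2"
  using mat_bound_sections[OF assms, of "{y}" "\<lambda>_. 1"] by (simp add: sqnorm_on_def)

lemma mat_bound_row:
  assumes "mat_bound T c" and "finite Y"
  shows "sqnorm_on Y (T x) \<le> c^2"
  using mat_bound_col[OF mat_bound_transpose[OF assms(1)] assms(2)] by simp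

lemma mat_bound_madd:
  assumes "mat_bound S a" and "mat_bound T b"
  shows "mat_bound (madd S T) (a + b)"
  unfolding mat_bound_def
proof (intro conjI allI impI)
  show "0 \<le> a + b" using assms by (simp add: mat_bound_nonneg add_nonneg_nonneg)
  fix X Y :: "'a set" and w v :: "'a \<Rightarrow> complex"
  assume fin: "finite X" "finite Y"
  have "(\<Sum>x\<in>X. \<Sum>y\<in>Y. w x * madd S T x y * v y) =
      (\<Sum>x\<in>X. \<Sum>y\<in>Y. w x * S x y * v y) + (\<Sum>x\<in>X. \<Sum>y\<in>Y. w x * T x y * v y)"
    unfolding madd_def by (simp add: algebra_simps sum.distrib)
  then have "cmod (\<Sum>x\<in>X. \<Sum>y\<in>Y. w x * madd S T x y * v y) \<le>
      cmod (\<Sum>x\<in>X. \<Sum>y\<in>Y. w x * S x y * v y) + cmod (\<Sum>x\<in>X. \<Sum>y\<in>Y. w x * T x y * v y)"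
    by (simp only: norm_triangle_ineq)
  also have "\<dots> \<le> a * sqrt (sqnorm_on X w) * sqrt (sqnorm_on Y v)
      + b * sqrt (sqnorm_on X w) * sqrt (sqnorm_on Y v)"
    by (intro add_mono mat_boundD[OF assms(1) fin] mat_boundD[OF assms(2) fin])
  finally show "cmod (\<Sum>x\<in>X. \<Sum>y\<in>Y. w x * madd S T x y * v y)
      \<le> (a + b) * sqrt (sqnorm_on X w) * sqrt (sqnorm_on Y v)"
    by (simp add: algebra_simps)
qed

lemma mat_bound_msmul:
  assumes "mat_bound T b"
  shows "mat_bound (msmul c T) (cmod c * b)"
  unfolding mat_bound_def
proof (intro conjI allI impI)
  show "0 \<le> cmod c * b" using mat_bound_nonneg[OF assms] by simp
  fix X Y :: "'a set" and w v :: "'a \<Rightarrow> complex"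
  assume fin: "finite X" "finite Y"
  have "(\<Sum>x\<in>X. \<Sum>y\<in>Y. w x * msmul c T x y * v y) = c * (\<Sum>x\<in>X. \<Sum>y\<in>Y. w x * T x y * v y)"
    unfolding msmul_def by (simp add: algebra_simps sum_distrib_left)
  then have "cmod (\<Sum>x\<in>X. \<Sum>y\<in>Y. w x * msmul c T x y * v y)
      = cmod c * cmod (\<Sum>x\<in>X. \<Sum>y\<in>Y. w x * T x y * v y)"
    by (simp add: norm_mult)
  also have "\<dots> \<le> cmod c * (b * sqrt (sqnorm_on X w) * sqrt (sqnorm_on Y v))"
    by (intro mult_left_mono mat_boundD[OF assms fin]) simp
  finally show "cmod (\<Sum>x\<in>X. \<Sum>y\<in>Y. w x * msmul c T x y * v y)
      \<le> cmod c * b * sqrt (sqnorm_on X w) * sqrt (sqnorm_on Y v)"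
    by (simp add: mult_ac)
qed

lemma mat_bound_mdiff:
  assumes "mat_bound S a" and "mat_bound T b"
  shows "mat_bound (mdiff S T) (a + b)"
proof -
  have "mdiff S T = madd S (msmul (-1) T)"
    unfolding mdiff_def madd_def msmul_def by simp
  with mat_bound_madd[OF assms(1) mat_bound_msmul[OF assms(2), of "-1"]] show ?thesis
    by simp
qed

lemma mat_bound_vmat:
  assumes "inj_on g D"
  shows "mat_bound (vmat D g) 1"
proof (rule mat_boundI_sections)
  fix X Y :: "'a set" and v :: "'a \<Rightarrow> complex"
  assume fin: "finite X" "finite Y"
  define hit where "hit x y = (if y \<in> D \<and> x = g y then 1 else 0 :: real)" for x y
  have row: "(cmod (\<Sum>y\<in>Y. vmat D g x y * v y))^2 \<le> (\<Sum>y\<in>Y. hit x y * (cmod (v y))^2)" for x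
  proof -
    define Z where "Z = {y\<in>Y. y \<in> D \<and> x = g y}"
    have "Z = {} \<or> (\<exists>y0. Z = {y0})"
      using assms unfolding inj_on_def Z_def by blast
    moreover have "(\<Sum>y\<in>Y. vmat D g x y * v y) = (\<Sum>y\<in>Z. v y)"
      unfolding Z_def vmat_def using fin by (auto simp: sum.inter_filter intro!: sum.cong)
    moreover have "(\<Sum>y\<in>Y. hit x y * (cmod (v y))^2) = (\<Sum>y\<in>Z. (cmod (v y))^2)"
      unfolding Z_def hit_def using fin by (auto simp: sum.inter_filter intro!: sum.cong)
    ultimately show ?thesis by auto
  qed
  have "sqnorm_on X (\<lambda>x. \<Sum>y\<in>Y. vmat D g x y * v y) \<le> (\<Sum>x\<in>X. \<Sum>y\<in>Y. hit x y * (cmod (v y))^2)"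
    unfolding sqnorm_on_def by (rule sum_mono) (rule row)
  also have "\<dots> = (\<Sum>y\<in>Y. (\<Sum>x\<in>X. hit x y) * (cmod (v y))^2)"
    by (subst sum.swap) (simp add: sum_distrib_right)
  also have "\<dots> \<le> (\<Sum>y\<in>Y. 1 * (cmod (v y))^2)"
  proof (intro sum_mono mult_right_mono)
    show "(\<Sum>x\<in>X. hit x y) \<le> 1" for y
      using fin by (cases "y \<in> D") (auto simp: hit_def sum.delta')
  qed simp
  finally show "sqnorm_on X (\<lambda>x. \<Sum>y\<in>Y. vmat D g x y * v y) \<le> 1^2 * sqnorm_on Y v"
    by (simp add: sqnorm_on_def)
qed simp

lemma sqnorm_on_vector_mmul:
  assumes T: "mat_bound T c" and a: "\<And>F. finite F \<Longrightarrow> sqnorm_on F a \<le> \<alpha>" and "finite Y"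
  shows "sqnorm_on Y (\<lambda>y. infsum (\<lambda>z. a z * T z y) UNIV) \<le> c^2 * \<alpha>"
proof -
  have c0: "0 \<le> c" using mat_bound_nonneg[OF T] .
  have \<alpha>0: "0 \<le> \<alpha>" using a[of "{}"] by (simp add: sqnorm_on_def)
  define g where "g y = infsum (\<lambda>z. a z * T z y) UNIV" for y
  define d where "d = (\<lambda>z. \<Sum>y\<in>Y. T z y * cnj (g y))"
  have summable: "(\<lambda>z. a z * T z y) summable_on UNIV" for y
    using cauchy_schwarz_infsum(1)[OF a mat_bound_col[OF T]] .
  have "complex_of_real (sqnorm_on Y g) = (\<Sum>y\<in>Y. cnj (g y) * infsum (\<lambda>z. a z * T z y) UNIV)"
    unfolding sum_cnj_mult_self[symmetric] g_def ..
  also have "\<dots> = infsum (\<lambda>z. \<Sum>y\<in>Y. cnj (g y) * (a z * T z y)) UNIV"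
    using infsum_linear_combination[OF \<open>finite Y\<close> summable] by simp
  also have "\<dots> = infsum (\<lambda>z. a z * d z) UNIV"
    unfolding d_def by (simp add: sum_distrib_left mult_ac)
  finally have "sqnorm_on Y g = cmod (infsum (\<lambda>z. a z * d z) UNIV)"
    by (metis norm_of_real abs_of_nonneg sqnorm_on_nonneg)
  also have "\<dots> \<le> sqrt \<alpha> * sqrt (c^2 * sqnorm_on Y g)"
  proof (rule cauchy_schwarz_infsum(2)[OF a])
    show "sqnorm_on F d \<le> c^2 * sqnorm_on Y g" if "finite F" for F
      using mat_bound_sections[OF T that \<open>finite Y\<close>, of "\<lambda>y. cnj (g y)"] by (simp add: d_def)
  qed
  also have "\<dots> = (c * sqrt \<alpha>) * sqrt (sqnorm_on Y g)"
    using c0 by (simp add: real_sqrt_mult mult_ac)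
  finally have "sqnorm_on Y g \<le> (c * sqrt \<alpha>)^2"
    by (rule sqrt_le_imp_le_sq[OF sqnorm_on_nonneg])
  with \<alpha>0 show ?thesis
    unfolding g_def by (simp add: power_mult_distrib)
qed

lemma sum_sum_mmul:
  assumes S: "mat_bound S a" and T: "mat_bound T b" and fX: "finite X" and fY: "finite Y"
  shows "(\<Sum>x\<in>X. \<Sum>y\<in>Y. w x * mmul S T x y * v y)
    = infsum (\<lambda>z. (\<Sum>x\<in>X. w x * S x z) * (\<Sum>y\<in>Y. T z y * v y)) UNIV"
proof -
  have summable: "(\<lambda>z. S x z * T z y) summable_on UNIV" for x y
    using cauchy_schwarz_infsum(1)[OF mat_bound_row[OF S] mat_bound_col[OF T]] .
  have inner: "(\<lambda>z. \<Sum>y\<in>Y. (w x * v y) * (S x z * T z y)) summable_on UNIV \<and>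
      infsum (\<lambda>z. \<Sum>y\<in>Y. (w x * v y) * (S x z * T z y)) UNIV
      = (\<Sum>y\<in>Y. w x * mmul S T x y * v y)" for x
    using infsum_linear_combination[OF fY summable, where c = "\<lambda>y. w x * v y"]
    by (simp add: mmul_def mult_ac)
  have "(\<Sum>x\<in>X. \<Sum>y\<in>Y. w x * mmul S T x y * v y)
      = infsum (\<lambda>z. \<Sum>x\<in>X. 1 * (\<Sum>y\<in>Y. (w x * v y) * (S x z * T z y))) UNIV"
    using infsum_linear_combination[OF fX, where c = "\<lambda>_. 1"
        and f = "\<lambda>x z. \<Sum>y\<in>Y. (w x * v y) * (S x z * T z y)"] inner
    by simp
  also have "\<dots> = infsum (\<lambda>z. (\<Sum>x\<in>X. w x * S x z) * (\<Sum>y\<in>Y. T z y * v y)) UNIV"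
    by (simp only: sum_product) (simp add: mult_ac)
  finally show ?thesis .
qed

lemma mat_bound_mmul:
  assumes S: "mat_bound S a" and T: "mat_bound T b"
  shows "mat_bound (mmul S T) (a * b)"
  unfolding mat_bound_def
proof (intro conjI allI impI)
  have a0: "0 \<le> a" and b0: "0 \<le> b"
    using S T by (simp_all add: mat_bound_nonneg)
  then show "0 \<le> a * b" by simp
  fix X Y :: "'a set" and w v :: "'a \<Rightarrow> complex"
  assume fX: "finite X" and fY: "finite Y"
  define p where "p = (\<lambda>z. \<Sum>x\<in>X. w x * S x z)"
  define q where "q = (\<lambda>z. \<Sum>y\<in>Y. T z y * v y)"
  have "cmod (\<Sum>x\<in>X. \<Sum>y\<in>Y. w x * mmul S T x y * v y) = cmod (infsum (\<lambda>z. p z * q z) UNIV)"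
    unfolding p_def q_def sum_sum_mmul[OF S T fX fY] ..
  also have "\<dots> \<le> sqrt (a^2 * sqnorm_on X w) * sqrt (b^2 * sqnorm_on Y v)"
  proof (rule cauchy_schwarz_infsum(2))
    show "sqnorm_on F p \<le> a^2 * sqnorm_on X w" if "finite F" for F
      using mat_bound_sections[OF mat_bound_transpose[OF S] that fX, of w]
      by (simp add: p_def mult.commute)
    show "sqnorm_on F q \<le> b^2 * sqnorm_on Y v" if "finite F" for F
      using mat_bound_sections[OF T that fY] by (simp add: q_def)
  qed
  also have "\<dots> = a * b * sqrt (sqnorm_on X w) * sqrt (sqnorm_on Y v)"
    using a0 b0 by (simp add: real_sqrt_mult)
  finally show "cmod (\<Sum>x\<in>X. \<Sum>y\<in>Y. w x * mmul S T x y * v y)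
      \<le> a * b * sqrt (sqnorm_on X w) * sqrt (sqnorm_on Y v)" .
qed

lemma madj_madj [simp]: "madj (madj T) = T"
  unfolding madj_def by simp

lemma madj_madd: "madj (madd S T) = madd (madj S) (madj T)"
  unfolding madj_def madd_def by simp

lemma madj_msmul: "madj (msmul c T) = msmul (cnj c) (madj T)"
  unfolding madj_def msmul_def by simp

lemma madj_mmul: "madj (mmul S T) = mmul (madj T) (madj S)"
  unfolding madj_def mmul_def
  by (intro ext) (simp del: infsum_cnj add: infsum_cnj[symmetric] mult.commute)

lemma madj_mdiff: "madj (mdiff S T) = mdiff (madj S) (madj T)"
  unfolding madj_def mdiff_def by simp

section \<open>Finitely supported vectors and the operator norm\<close>

lemma l2norm_nonneg: "0 \<le> l2norm v"
  unfolding l2norm_def by (simp add: infsum_nonneg)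

lemma l2norm_finite_support:
  assumes "finite Y" and "\<And>y. y \<notin> Y \<Longrightarrow> v y = 0"
  shows "l2norm v = sqrt (sqnorm_on Y v)"
  unfolding l2norm_def sqnorm_on_def using assms by (subst infsum_finite_support[OF assms(1)]) auto

lemma sqnorm_on_le_l2norm:
  assumes "(\<lambda>x. (cmod (u x))^2) summable_on UNIV" and "finite X"
  shows "sqnorm_on X u \<le> (l2norm u)^2"
proof -
  have "sqnorm_on X u \<le> infsum (\<lambda>x. (cmod (u x))^2) UNIV"
    unfolding sqnorm_on_def using assms by (intro finite_sum_le_infsum) auto
  then show ?thesis
    unfolding l2norm_def by (simp add: infsum_nonneg)
qed

lemma mvec_finite_support:
  assumes "finite Y" and "\<And>y. y \<notin> Y \<Longrightarrow> v y = 0"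
  shows "mvec T v x = (\<Sum>y\<in>Y. T x y * v y)"
  unfolding mvec_def using assms by (intro sum.mono_neutral_left) auto

lemma mat_bound_mvec:
  assumes "mat_bound T K" and "fin_supp v"
  shows "(\<lambda>x. (cmod (mvec T v x))^2) summable_on UNIV" and "l2norm (mvec T v) \<le> K * l2norm v"
proof -
  define Y where "Y = {y. v y \<noteq> 0}"
  have Y: "finite Y" "\<And>y. y \<notin> Y \<Longrightarrow> v y = 0"
    using assms(2) unfolding Y_def fin_supp_def by auto
  have fin: "sum (\<lambda>x. (cmod (mvec T v x))^2) F \<le> K^2 * sqnorm_on Y v" if "finite F" for F
    using mat_bound_sections[OF assms(1) that Y(1), of v]
    by (simp add: sqnorm_on_def mvec_finite_support[OF Y])
  show "(\<lambda>x. (cmod (mvec T v x))^2) summable_on UNIV"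
    by (rule bounded_nonneg_summable_on(1)[OF _ fin]) simp
  have bound: "infsum (\<lambda>x. (cmod (mvec T v x))^2) UNIV \<le> K^2 * sqnorm_on Y v"
    by (rule bounded_nonneg_summable_on(2)[OF _ fin]) simp
  have "l2norm (mvec T v) \<le> sqrt (K^2 * sqnorm_on Y v)"
    unfolding l2norm_def using bound by (rule real_sqrt_le_mono)
  also have "\<dots> = K * l2norm v"
    using mat_bound_nonneg[OF assms(1)] by (simp add: real_sqrt_mult l2norm_finite_support[OF Y])
  finally show "l2norm (mvec T v) \<le> K * l2norm v" .
qed

lemma sqnorm_on_sections_unit_vector:
  assumes "finite Y" and "0 < sqnorm_on Y v"
  obtains u where "fin_supp u" and "l2norm u = 1"
    and "\<And>X. sqnorm_on X (\<lambda>x. \<Sum>y\<in>Y. T x y * v y) = sqnorm_on Y v * sqnorm_on X (mvec T u)"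
proof -
  define s where "s = sqnorm_on Y v"
  define c where "c = complex_of_real (1 / sqrt s)"
  have "cmod c = 1 / sqrt s"
    unfolding c_def norm_of_real using assms(2) by (simp add: s_def)
  then have c: "(cmod c)^2 = 1 / s"
    by (simp add: power_divide s_def sqnorm_on_nonneg)
  define u where "u = (\<lambda>y. if y \<in> Y then c * v y else 0)"
  have u: "\<And>y. y \<notin> Y \<Longrightarrow> u y = 0" by (simp add: u_def)
  have "fin_supp u"
    unfolding fin_supp_def using assms(1) by (rule finite_subset[rotated]) (auto simp: u_def)
  moreover have "l2norm u = 1"
  proof -
    have "sqnorm_on Y u = sqnorm_on Y (\<lambda>y. c * v y)"
      unfolding u_def sqnorm_on_def by simp
    also have "\<dots> = 1"
      using c assms(2) by (simp add: sqnorm_on_mult s_def)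
    finally show ?thesis
      by (simp add: l2norm_finite_support[OF assms(1) u])
  qed
  moreover have "mvec T u = (\<lambda>x. c * (\<Sum>y\<in>Y. T x y * v y))"
  proof
    fix x
    have "mvec T u x = (\<Sum>y\<in>Y. T x y * u y)"
      using assms(1) u by (rule mvec_finite_support)
    then show "mvec T u x = c * (\<Sum>y\<in>Y. T x y * v y)"
      by (simp add: u_def sum_distrib_left mult_ac)
  qed
  then have "sqnorm_on X (\<lambda>x. \<Sum>y\<in>Y. T x y * v y) = s * sqnorm_on X (mvec T u)" for X
    using assms(2) by (simp add: sqnorm_on_mult c s_def)
  ultimately show thesis
    using that s_def by blast
qed

lemma mat_boundI_mvec:
  assumes "0 \<le> K"
    and bound: "\<And>v. fin_supp v \<Longrightarrow> l2norm v \<le> 1 \<Longrightarrow>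
      (\<lambda>x. (cmod (mvec T v x))^2) summable_on UNIV \<and> l2norm (mvec T v) \<le> K"
  shows "mat_bound T K"
proof (rule mat_boundI_sections[OF assms(1)])
  fix X Y :: "'a set" and v :: "'a \<Rightarrow> complex"
  assume fin: "finite X" "finite Y"
  show "sqnorm_on X (\<lambda>x. \<Sum>y\<in>Y. T x y * v y) \<le> K^2 * sqnorm_on Y v"
  proof (cases "sqnorm_on Y v = 0")
    case True
    then have "\<forall>y\<in>Y. v y = 0"
      using fin unfolding sqnorm_on_def by (simp add: sum_nonneg_eq_0_iff)
    then show ?thesis by (simp add: sqnorm_on_def sum_nonneg)
  next
    case False
    then have "0 < sqnorm_on Y v"
      using sqnorm_on_nonneg[of Y v] by simp
    with fin(2) obtain u where "fin_supp u" and "l2norm u = 1"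
      and eq: "\<And>X. sqnorm_on X (\<lambda>x. \<Sum>y\<in>Y. T x y * v y) = sqnorm_on Y v * sqnorm_on X (mvec T u)"
      by (rule sqnorm_on_sections_unit_vector[where T = T]) blast
    then have summ: "(\<lambda>x. (cmod (mvec T u x))^2) summable_on UNIV" and "l2norm (mvec T u) \<le> K"
      using bound by auto
    have "sqnorm_on X (mvec T u) \<le> (l2norm (mvec T u))^2"
      using summ fin(1) by (rule sqnorm_on_le_l2norm)
    also have "\<dots> \<le> K^2"
      using \<open>l2norm (mvec T u) \<le> K\<close> by (simp add: l2norm_nonneg power_mono)
    finally show ?thesis
      unfolding eq using sqnorm_on_nonneg[of Y v] by (simp add: mult_left_mono mult.commute)
  qed
qed

lemma bounded_op_mat_bound:
  assumes "bounded_op S"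
  obtains c where "mat_bound S c"
proof -
  obtain C where C: "\<And>v. fin_supp v \<Longrightarrow>
      (\<lambda>x. (cmod (mvec S v x))^2) summable_on UNIV \<and> l2norm (mvec S v) \<le> C * l2norm v"
    using assms unfolding bounded_op_def by blast
  have "mat_bound S (max C 0)"
  proof (rule mat_boundI_mvec)
    fix v :: "'a \<Rightarrow> complex"
    assume "fin_supp v" and "l2norm v \<le> 1"
    moreover have "C * l2norm v \<le> max C 0"
      using \<open>l2norm v \<le> 1\<close> l2norm_nonneg[of v]
      by (metis max.cobounded1 max.cobounded2 mult_left_le mult_right_mono order_trans)
    ultimately show "(\<lambda>x. (cmod (mvec S v x))^2) summable_on UNIV \<and> l2norm (mvec S v) \<le> max C 0"
      using C by (meson order_trans)
  qed simp
  then show ?thesis by (rule that)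
qed

lemma mat_bound_opnorm:
  assumes "mat_bound D K"
  shows "mat_bound D (opnorm D)"
proof -
  define A where "A = {l2norm (mvec D v) | v. fin_supp v \<and> l2norm v \<le> 1}"
  have "bdd_above A"
  proof (rule bdd_aboveI)
    fix a assume "a \<in> A"
    then obtain v where "a = l2norm (mvec D v)" "fin_supp v" "l2norm v \<le> 1"
      unfolding A_def by blast
    then show "a \<le> K"
      using mat_bound_mvec(2)[OF assms] mat_bound_nonneg[OF assms]
      by (metis mult_left_le order_trans)
  qed
  then have le: "l2norm (mvec D v) \<le> opnorm D" if "fin_supp v" "l2norm v \<le> 1" for v
    unfolding opnorm_def A_def[symmetric] by (rule cSup_upper[rotated]) (use that A_def in blast)
  have "l2norm (mvec D (\<lambda>_. 0)) \<le> opnorm D"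
    by (rule le) (simp_all add: fin_supp_def l2norm_def)
  then have "0 \<le> opnorm D"
    using l2norm_nonneg[of "mvec D (\<lambda>_. 0)"] by linarith
  then show ?thesis
    using le mat_bound_mvec(1)[OF assms] by (intro mat_boundI_mvec) auto
qed

section \<open>Decay of rows and the uniform Roe algebra\<close>

definition row_decay :: "('a::metric_space) mat \<Rightarrow> bool" where
  "row_decay T \<longleftrightarrow>
     (\<forall>\<eta>>0. \<exists>r. \<forall>x Y. finite Y \<longrightarrow> (\<forall>y\<in>Y. r < dist x y) \<longrightarrow> sqnorm_on Y (T x) \<le> \<eta>)"

text \<open>Decay of the rows of \<open>T\<close> and of \<open>madj T\<close> (that is, of the columns of \<open>T\<close>) is an
  \<open>\<ell>\<^sup>2\<close>-form of quasi-locality that survives products, by uniform local finiteness, and norm limits.\<close>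

definition decaying_matrix :: "('a::metric_space) mat \<Rightarrow> bool" where
  "decaying_matrix T \<longleftrightarrow> (\<exists>c. mat_bound T c) \<and> row_decay T \<and> row_decay (madj T)"

lemma row_decayI:
  assumes "\<And>\<eta>. \<eta> > 0 \<Longrightarrow>
    \<exists>r. \<forall>x Y. finite Y \<longrightarrow> (\<forall>y\<in>Y. r < dist x y) \<longrightarrow> sqnorm_on Y (T x) \<le> \<eta>"
  shows "row_decay T"
  using assms unfolding row_decay_def by blast

lemma row_decayE:
  assumes "row_decay T" and "\<eta> > 0"
  obtains r where "\<And>x Y. finite Y \<Longrightarrow> (\<forall>y\<in>Y. r < dist x y) \<Longrightarrow> sqnorm_on Y (T x) \<le> \<eta>"
  using assms unfolding row_decay_def by meson

lemma row_decay_finite_propagation: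
  assumes "\<And>x y. T x y \<noteq> 0 \<Longrightarrow> dist x y \<le> C"
  shows "row_decay T"
proof (rule row_decayI)
  fix \<eta> :: real
  assume "\<eta> > 0"
  have "sqnorm_on Y (T x) \<le> \<eta>" if "\<forall>y\<in>Y. C < dist x y" for x Y
  proof -
    have "\<forall>y\<in>Y. T x y = 0" using that assms by force
    with \<open>\<eta> > 0\<close> show ?thesis by (simp add: sqnorm_on_def)
  qed
  then show "\<exists>r. \<forall>x Y. finite Y \<longrightarrow> (\<forall>y\<in>Y. r < dist x y) \<longrightarrow> sqnorm_on Y (T x) \<le> \<eta>"
    by blast
qed

lemma row_decay_infsum:
  assumes "row_decay T" and "\<eta> > 0"
  obtains r where "\<And>x A. \<forall>y\<in>A. r < dist x y \<Longrightarrow>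
    infsum (\<lambda>y. if y \<in> A then (cmod (T x y))^2 else 0) UNIV \<le> \<eta>"
proof -
  obtain r where r: "\<And>x Y. finite Y \<Longrightarrow> (\<forall>y\<in>Y. r < dist x y) \<Longrightarrow> sqnorm_on Y (T x) \<le> \<eta>"
    using row_decayE[OF assms] by blast
  have "infsum (\<lambda>y. if y \<in> A then (cmod (T x y))^2 else 0) UNIV \<le> \<eta>"
    if far: "\<forall>y\<in>A. r < dist x y" for x A
  proof (rule bounded_nonneg_summable_on(2))
    fix F :: "'a set"
    assume "finite F"
    then have "sum (\<lambda>y. if y \<in> A then (cmod (T x y))^2 else 0) F = sqnorm_on {y\<in>F. y \<in> A} (T x)"
      by (simp add: sqnorm_on_def sum.inter_filter)
    also have "\<dots> \<le> \<eta>"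
      using \<open>finite F\<close> far by (intro r) auto
    finally show "sum (\<lambda>y. if y \<in> A then (cmod (T x y))^2 else 0) F \<le> \<eta>" .
  qed simp
  then show thesis by (rule that)
qed

lemma row_decay_madd:
  assumes "row_decay S" and "row_decay T"
  shows "row_decay (madd S T)"
proof (rule row_decayI)
  fix \<eta> :: real
  assume "\<eta> > 0"
  then obtain r1 r2
    where r1: "\<And>x Y. finite Y \<Longrightarrow> (\<forall>y\<in>Y. r1 < dist x y) \<Longrightarrow> sqnorm_on Y (S x) \<le> \<eta>/4"
      and r2: "\<And>x Y. finite Y \<Longrightarrow> (\<forall>y\<in>Y. r2 < dist x y) \<Longrightarrow> sqnorm_on Y (T x) \<le> \<eta>/4"
    using assms by (metis row_decayE divide_pos_pos zero_less_numeral)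
  have "sqnorm_on Y (madd S T x) \<le> \<eta>" if "finite Y" "\<forall>y\<in>Y. max r1 r2 < dist x y" for x Y
  proof -
    have "sqnorm_on Y (madd S T x) \<le> 2 * sqnorm_on Y (S x) + 2 * sqnorm_on Y (T x)"
      unfolding madd_def by (rule sqnorm_on_add_le)
    with r1[of Y x] r2[of Y x] that show ?thesis by auto
  qed
  then show "\<exists>r. \<forall>x Y. finite Y \<longrightarrow> (\<forall>y\<in>Y. r < dist x y) \<longrightarrow> sqnorm_on Y (madd S T x) \<le> \<eta>"
    by blast
qed

lemma row_decay_msmul:
  assumes "row_decay T"
  shows "row_decay (msmul c T)"
proof (rule row_decayI)
  fix \<eta> :: real
  assume "\<eta> > 0"
  define k where "k = (cmod c)^2 + 1"
  have "k > 0" by (simp add: k_def add_nonneg_pos)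
  with assms \<open>\<eta> > 0\<close> obtain r
    where r: "\<And>x Y. finite Y \<Longrightarrow> (\<forall>y\<in>Y. r < dist x y) \<Longrightarrow> sqnorm_on Y (T x) \<le> \<eta>/k"
    using row_decayE[OF assms, of "\<eta>/k"] by auto
  have "sqnorm_on Y (msmul c T x) \<le> \<eta>" if "finite Y" "\<forall>y\<in>Y. r < dist x y" for x Y
  proof -
    have "sqnorm_on Y (msmul c T x) = (cmod c)^2 * sqnorm_on Y (T x)"
      unfolding msmul_def by (rule sqnorm_on_mult)
    also have "\<dots> \<le> k * (\<eta>/k)"
      using r[OF that] sqnorm_on_nonneg[of Y "T x"] by (intro mult_mono) (auto simp: k_def)
    finally show ?thesis using \<open>k > 0\<close> by simp
  qed
  then show "\<exists>r. \<forall>x Y. finite Y \<longrightarrow> (\<forall>y\<in>Y. r < dist x y) \<longrightarrow> sqnorm_on Y (msmul c T x) \<le> \<eta>"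
    by blast
qed

lemma sqnorm_on_finite_mmul:
  assumes "finite N"
  shows "sqnorm_on Y (\<lambda>y. \<Sum>z\<in>N. s z * T z y) \<le> sqnorm_on N s * (\<Sum>z\<in>N. sqnorm_on Y (T z))"
proof -
  have "(cmod (\<Sum>z\<in>N. s z * T z y))^2 \<le> sqnorm_on N s * sqnorm_on N (\<lambda>z. T z y)" for y
  proof -
    have "(cmod (\<Sum>z\<in>N. s z * T z y))^2 \<le> (sqrt (sqnorm_on N s) * sqrt (sqnorm_on N (\<lambda>z. T z y)))^2"
      by (rule power_mono[OF cauchy_schwarz_on]) simp
    then show ?thesis by (simp add: power_mult_distrib sqnorm_on_nonneg)
  qed
  then have "sqnorm_on Y (\<lambda>y. \<Sum>z\<in>N. s z * T z y) \<le> (\<Sum>y\<in>Y. sqnorm_on N s * sqnorm_on N (\<lambda>z. T z y))"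
    unfolding sqnorm_on_def[of Y] by (rule sum_mono)
  also have "\<dots> = sqnorm_on N s * (\<Sum>z\<in>N. sqnorm_on Y (T z))"
    unfolding sqnorm_on_def by (simp add: sum_distrib_left[symmetric] sum.swap[of _ Y])
  finally show ?thesis .
qed

text \<open>The row of \<open>mmul S T\<close> at \<open>x\<close> splits along a set \<open>B\<close>: off \<open>B\<close> the row of \<open>S\<close> is
  small and \<open>T\<close> is bounded; on \<open>B\<close> only the rows of \<open>T\<close> indexed by \<open>B\<close> matter.\<close>

lemma sqnorm_on_mmul_row:
  assumes S: "mat_bound S a" and T: "mat_bound T b" and "finite B" and "finite Y"
    and off: "\<And>F. finite F \<Longrightarrow> sqnorm_on F (\<lambda>z. if z \<in> B then 0 else S x z) \<le> \<eta>"
  shows "sqnorm_on Y (mmul S T x) \<le> 2 * a^2 * (\<Sum>z\<in>B. sqnorm_on Y (T z)) + 2 * b^2 * \<eta>"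
proof -
  define near where "near = (\<lambda>y. \<Sum>z\<in>B. S x z * T z y)"
  define tail where "tail = (\<lambda>y. infsum (\<lambda>z. (if z \<in> B then 0 else S x z) * T z y) UNIV)"
  have "mmul S T x = (\<lambda>y. near y + tail y)"
  proof
    fix y
    have "(\<lambda>z. S x z * T z y)
        = (\<lambda>z. (if z \<in> B then S x z * T z y else 0) + (if z \<in> B then 0 else S x z) * T z y)"
      by auto
    moreover have "(\<lambda>z. if z \<in> B then S x z * T z y else 0) summable_on UNIV"
      using \<open>finite B\<close> by (intro finite_nonzero_values_imp_summable_on) (auto elim: finite_subset[rotated])
    moreover have "infsum (\<lambda>z. if z \<in> B then S x z * T z y else 0) UNIV = near y"
      using \<open>finite B\<close> by (subst infsum_finite_support[of B]) (auto simp: near_def)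
    ultimately show "mmul S T x y = near y + tail y"
      unfolding mmul_def tail_def
      using cauchy_schwarz_infsum(1)[OF off mat_bound_col[OF T]] by (simp add: infsum_add)
  qed
  then have "sqnorm_on Y (mmul S T x) \<le> 2 * sqnorm_on Y near + 2 * sqnorm_on Y tail"
    by (simp add: sqnorm_on_add_le)
  moreover have "sqnorm_on Y near \<le> a^2 * (\<Sum>z\<in>B. sqnorm_on Y (T z))"
    unfolding near_def using mat_bound_row[OF S \<open>finite B\<close>, of x]
    by (intro order_trans[OF sqnorm_on_finite_mmul[OF \<open>finite B\<close>]] mult_right_mono)
      (simp_all add: sum_nonneg sqnorm_on_nonneg)
  moreover have "sqnorm_on Y tail \<le> b^2 * \<eta>"
    unfolding tail_def using T off \<open>finite Y\<close> by (rule sqnorm_on_vector_mmul)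
  ultimately show ?thesis by simp
qed

lemma row_decay_off_ball:
  assumes "row_decay S" and "\<eta> > 0"
  obtains R where "R > 0"
    and "\<And>x F. finite F \<Longrightarrow> sqnorm_on F (\<lambda>z. if z \<in> cball x R then 0 else S x z) \<le> \<eta>"
proof -
  obtain r where r: "\<And>x Y. finite Y \<Longrightarrow> (\<forall>y\<in>Y. r < dist x y) \<Longrightarrow> sqnorm_on Y (S x) \<le> \<eta>"
    using row_decayE[OF assms] by blast
  have "sqnorm_on F (\<lambda>z. if z \<in> cball x (max r 1) then 0 else S x z) \<le> \<eta>" if "finite F" for x F
  proof -
    have "sqnorm_on F (\<lambda>z. if z \<in> cball x (max r 1) then 0 else S x z)
        = sqnorm_on {z\<in>F. z \<notin> cball x (max r 1)} (S x)"
      unfolding sqnorm_on_def using that by (auto simp: sum.inter_filter intro!: sum.cong)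
    also have "\<dots> \<le> \<eta>"
      by (rule r) (use that in auto)
    finally show ?thesis .
  qed
  then show thesis
    by (intro that[of "max r 1"]) auto
qed

lemma row_decay_near_ball:
  assumes "row_decay T" and "\<eta> > 0"
  obtains r where "\<And>x R Y z. finite Y \<Longrightarrow> \<forall>y\<in>Y. R + r < dist x y \<Longrightarrow> z \<in> cball x R \<Longrightarrow>
    sqnorm_on Y (T z) \<le> \<eta>"
proof -
  obtain r where r: "\<And>x Y. finite Y \<Longrightarrow> (\<forall>y\<in>Y. r < dist x y) \<Longrightarrow> sqnorm_on Y (T x) \<le> \<eta>"
    using row_decayE[OF assms] by blast
  have "sqnorm_on Y (T z) \<le> \<eta>"
    if "finite Y" and far: "\<forall>y\<in>Y. R + r < dist x y" and "z \<in> cball x R" for x R Y z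
  proof (rule r[OF \<open>finite Y\<close>], intro ballI)
    fix y assume "y \<in> Y"
    with far \<open>z \<in> cball x R\<close> dist_triangle[of x y z] show "r < dist z y"
      by (force simp: dist_commute)
  qed
  then show thesis by (rule that)
qed

lemma row_decay_mmul:
  assumes ulf: "unif_locally_finite TYPE('a::metric_space)"
    and S: "mat_bound S a" "row_decay S" and T: "mat_bound T b" "row_decay T"
  shows "row_decay (mmul S T :: 'a mat)"
proof (rule row_decayI)
  fix \<eta> :: real
  assume "\<eta> > 0"
  have small: "p * (\<eta>/4 / (p + 1)) \<le> \<eta>/4" if "0 \<le> p" for p :: real
    using that \<open>\<eta> > 0\<close> by (simp add: field_simps)
  define \<eta>1 where "\<eta>1 = \<eta>/4 / (b^2 + 1)"
  obtain R where "R > 0" and off: "\<And>x F. finite F \<Longrightarrow>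
      sqnorm_on F (\<lambda>z. if z \<in> cball x R then 0 else S x z) \<le> \<eta>1"
    using row_decay_off_ball[OF S(2), of \<eta>1] \<open>\<eta> > 0\<close> by (auto simp: \<eta>1_def add_nonneg_pos)
  obtain N :: nat where N: "\<And>x::'a. finite (cball x R) \<and> card (cball x R) \<le> N"
    using ulf \<open>R > 0\<close> unfolding unif_locally_finite_def by blast
  define \<eta>2 where "\<eta>2 = \<eta>/4 / (a^2 * N + 1)"
  have "\<eta>2 > 0" using \<open>\<eta> > 0\<close> by (simp add: \<eta>2_def add_nonneg_pos)
  with T(2) obtain r where near: "\<And>x \<rho> Y z. finite Y \<Longrightarrow> \<forall>y\<in>Y. \<rho> + r < dist x y \<Longrightarrow>
      z \<in> cball x \<rho> \<Longrightarrow> sqnorm_on Y (T z) \<le> \<eta>2"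
    by (rule row_decay_near_ball) blast
  have "sqnorm_on Y (mmul S T x) \<le> \<eta>" if "finite Y" and far: "\<forall>y\<in>Y. R + r < dist x y" for x Y
  proof -
    have "(\<Sum>z\<in>cball x R. sqnorm_on Y (T z)) \<le> card (cball x R) * \<eta>2"
      using sum_bounded_above[of "cball x R" "\<lambda>z. sqnorm_on Y (T z)" \<eta>2] near[OF that] by simp
    also have "\<dots> \<le> N * \<eta>2"
      using N \<open>\<eta> > 0\<close> by (intro mult_right_mono) (simp_all add: \<eta>2_def)
    finally have "2 * a^2 * (\<Sum>z\<in>cball x R. sqnorm_on Y (T z)) \<le> 2 * a^2 * (N * \<eta>2)"
      by (rule mult_left_mono) simp
    with sqnorm_on_mmul_row[OF S(1) T(1) conjunct1[OF N] \<open>finite Y\<close> off[where x = x]]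
    have "sqnorm_on Y (mmul S T x) \<le> 2 * a^2 * (N * \<eta>2) + 2 * b^2 * \<eta>1"
      by linarith
    also have "\<dots> \<le> \<eta>"
    proof -
      have "a^2 * (N * \<eta>2) \<le> \<eta>/4"
        using small[of "a^2 * N"] unfolding \<eta>2_def by (simp add: mult.assoc)
      moreover have "b^2 * \<eta>1 \<le> \<eta>/4"
        using small[of "b^2"] unfolding \<eta>1_def by simp
      ultimately show ?thesis by linarith
    qed
    finally show ?thesis .
  qed
  then show "\<exists>r. \<forall>x Y. finite Y \<longrightarrow> (\<forall>y\<in>Y. r < dist x y) \<longrightarrow> sqnorm_on Y (mmul S T x) \<le> \<eta>"
    by blast
qed

lemma decaying_matrix_vmat:
  assumes "partial_translation D g"
  shows "decaying_matrix (vmat D g)"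
proof -
  obtain C where "inj_on g D" and C: "\<forall>x\<in>D. dist x (g x) \<le> C"
    using assms unfolding partial_translation_def by blast
  have "row_decay (vmat D g)"
    using C by (intro row_decay_finite_propagation[of _ C]) (auto simp: vmat_def dist_commute split: if_splits)
  moreover have "row_decay (madj (vmat D g))"
    using C by (intro row_decay_finite_propagation[of _ C]) (auto simp: vmat_def madj_def split: if_splits)
  ultimately show ?thesis
    unfolding decaying_matrix_def using mat_bound_vmat[OF \<open>inj_on g D\<close>] by blast
qed

lemma decaying_matrix_madd: "decaying_matrix S \<Longrightarrow> decaying_matrix T \<Longrightarrow> decaying_matrix (madd S T)"
  unfolding decaying_matrix_def madj_madd using mat_bound_madd row_decay_madd by blast

lemma decaying_matrix_msmul: "decaying_matrix T \<Longrightarrow> decaying_matrix (msmul c T)"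
  unfolding decaying_matrix_def madj_msmul using mat_bound_msmul row_decay_msmul by blast

lemma decaying_matrix_madj: "decaying_matrix T \<Longrightarrow> decaying_matrix (madj T)"
  unfolding decaying_matrix_def using mat_bound_madj by auto

lemma decaying_matrix_mmul:
  assumes "unif_locally_finite TYPE('a::metric_space)"
    and "decaying_matrix S" and "decaying_matrix T"
  shows "decaying_matrix (mmul S T :: 'a mat)"
proof -
  obtain a b where S: "mat_bound S a" "row_decay S" "row_decay (madj S)"
    and T: "mat_bound T b" "row_decay T" "row_decay (madj T)"
    using assms(2,3) unfolding decaying_matrix_def by blast
  have "row_decay (mmul S T)"
    using assms(1) S(1,2) T(1,2) by (rule row_decay_mmul)
  moreover have "row_decay (madj (mmul S T))"
    unfolding madj_mmul using assms(1) mat_bound_madj[OF T(1)] T(3) mat_bound_madj[OF S(1)] S(3)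
    by (rule row_decay_mmul)
  ultimately show ?thesis
    unfolding decaying_matrix_def using mat_bound_mmul[OF S(1) T(1)] by blast
qed

lemma row_decay_limit:
  assumes T: "\<And>n. row_decay (T n)" and D: "\<And>n. mat_bound (mdiff (T n) S) (c n)"
    and "c \<longlonglongrightarrow> 0"
  shows "row_decay S"
proof (rule row_decayI)
  fix \<eta> :: real
  assume "\<eta> > 0"
  then obtain n where n: "\<bar>c n\<bar> < sqrt (\<eta>/4)"
    using LIMSEQ_D[OF \<open>c \<longlonglongrightarrow> 0\<close>, of "sqrt (\<eta>/4)"] by auto
  have close: "sqnorm_on Y (\<lambda>y. S x y - T n x y) \<le> \<eta>/4" if "finite Y" for x Y
  proof -
    have "sqnorm_on Y (\<lambda>y. S x y - T n x y) = sqnorm_on Y (mdiff (T n) S x)"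
      unfolding sqnorm_on_def mdiff_def by (simp add: norm_minus_commute)
    also have "\<dots> \<le> (c n)^2"
      using D that by (rule mat_bound_row)
    also have "\<dots> \<le> \<eta>/4"
      using power_mono[OF less_imp_le[OF n] abs_ge_zero, of 2] \<open>\<eta> > 0\<close> by simp
    finally show ?thesis .
  qed
  obtain r where r: "\<And>x Y. finite Y \<Longrightarrow> (\<forall>y\<in>Y. r < dist x y) \<Longrightarrow> sqnorm_on Y (T n x) \<le> \<eta>/4"
    using row_decayE[OF T, of "\<eta>/4"] \<open>\<eta> > 0\<close> by auto
  have "sqnorm_on Y (S x) \<le> \<eta>" if "finite Y" and "\<forall>y\<in>Y. r < dist x y" for x Y
  proof -
    have "sqnorm_on Y (S x) \<le> 2 * sqnorm_on Y (T n x) + 2 * sqnorm_on Y (\<lambda>y. S x y - T n x y)"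
      using sqnorm_on_add_le[of Y "T n x" "\<lambda>y. S x y - T n x y"] by simp
    moreover have "sqnorm_on Y (\<lambda>y. S x y - T n x y) \<le> \<eta>/4"
      using that(1) by (rule close)
    ultimately show ?thesis using r[OF that] by linarith
  qed
  then show "\<exists>r. \<forall>x Y. finite Y \<longrightarrow> (\<forall>y\<in>Y. r < dist x y) \<longrightarrow> sqnorm_on Y (S x) \<le> \<eta>"
    by blast
qed

lemma decaying_matrix_limit:
  assumes T: "\<And>n. decaying_matrix (T n)" and "bounded_op S"
    and lim: "(\<lambda>n. opnorm (mdiff (T n) S)) \<longlonglongrightarrow> 0"
  shows "decaying_matrix S"
proof -
  obtain C where S: "mat_bound S C"
    using \<open>bounded_op S\<close> by (rule bounded_op_mat_bound)
  have D: "mat_bound (mdiff (T n) S) (opnorm (mdiff (T n) S))" for n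
  proof -
    obtain c where "mat_bound (T n) c" using T[of n] unfolding decaying_matrix_def by blast
    then show ?thesis by (rule mat_bound_opnorm[OF mat_bound_mdiff[OF _ S]])
  qed
  have rows: "row_decay (T n)" "row_decay (madj (T n))" for n
    using T[of n] unfolding decaying_matrix_def by auto
  have "row_decay S"
    using rows(1) D lim by (rule row_decay_limit)
  moreover have "row_decay (madj S)"
    using rows(2) mat_bound_madj[OF D, unfolded madj_mdiff] lim by (rule row_decay_limit)
  ultimately show ?thesis
    unfolding decaying_matrix_def using S by blast
qed

lemma uroe_decaying_matrix:
  assumes "unif_locally_finite TYPE('a::metric_space)" and "(T :: 'a mat) \<in> uroe"
  shows "decaying_matrix T"
  using assms(2)
proof (induction rule: uroe.induct)
  case (gen D g)
  then show ?case by (rule decaying_matrix_vmat)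
next
  case (add S T)
  show ?case using add.IH by (rule decaying_matrix_madd)
next
  case (smul T c)
  show ?case using smul.IH by (rule decaying_matrix_msmul)
next
  case (mult S T)
  show ?case using assms(1) mult.IH by (rule decaying_matrix_mmul)
next
  case (adj T)
  show ?case using adj.IH by (rule decaying_matrix_madj)
next
  case (lim T S)
  show ?case using lim.IH lim.hyps(2,3) by (rule decaying_matrix_limit)
qed

section \<open>Columns of the images of coordinate projections\<close>

lemma proj_uroe: "proj (B::'a::metric_space set) \<in> uroe"
proof -
  have "partial_translation B (id :: 'a \<Rightarrow> 'a)"
    unfolding partial_translation_def by (intro conjI exI[of _ 0]) auto
  moreover have "proj B = vmat B id"
    unfolding proj_def vmat_def by (intro ext) auto
  ultimately show ?thesis by (simp add: uroe.gen)
qed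

lemma madj_proj: "madj (proj B) = proj B"
  unfolding madj_def proj_def by (intro ext) auto

lemma mmul_proj_proj: "mmul (proj B) (proj B) = proj B"
  unfolding mmul_def
  by (intro ext, subst infsum_finite_support[of "{_}"]) (auto simp: proj_def)

lemma proj_Un: "A \<inter> B = {} \<Longrightarrow> proj (A \<union> B) = madd (proj A) (proj B)"
  unfolding proj_def madd_def by (intro ext) auto

lemma diag_self_adjoint_idempotent:
  assumes "P = mmul (madj P) P"
  shows "P y y = complex_of_real ((l2norm (\<lambda>z. P z y))^2)"
proof -
  have "P y y = infsum (\<lambda>z. cnj (P z y) * P z y) UNIV"
    by (subst assms) (simp add: mmul_def madj_def)
  also have "\<dots> = complex_of_real (infsum (\<lambda>z. (cmod (P z y))^2) UNIV)"
    by (simp only: cnj_mult_self infsum_complex_of_real)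
  finally show ?thesis
    by (simp add: l2norm_def infsum_nonneg)
qed

text \<open>The diagonal entry \<open>q\<close> of a column of norm \<open>\<surd>q\<close> satisfies \<open>q\<^sup>2 \<le> q\<close>.\<close>

lemma self_adjoint_idempotent_col_le_1:
  assumes "P = mmul (madj P) P"
  shows "(l2norm (\<lambda>z. P z y))^2 \<le> 1"
proof -
  define q where "q = (l2norm (\<lambda>z. P z y))^2"
  have "0 \<le> q" by (simp add: q_def)
  have diag: "cmod (P y y) = q"
    unfolding diag_self_adjoint_idempotent[OF assms, of y] q_def[symmetric] using \<open>0 \<le> q\<close> by simp
  have "q^2 \<le> q"
  proof (cases "(\<lambda>z. (cmod (P z y))^2) summable_on UNIV")
    case True
    have "sqnorm_on {y} (\<lambda>z. P z y) \<le> q"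
      unfolding q_def using True by (rule sqnorm_on_le_l2norm) simp
    with diag show ?thesis by (simp add: sqnorm_on_def)
  next
    case False
    then have "q = 0" by (simp add: q_def l2norm_def infsum_not_exists)
    then show ?thesis by simp
  qed
  then have "q * q \<le> q * 1" by (simp add: power2_eq_square)
  with \<open>0 \<le> q\<close> show ?thesis
    unfolding q_def[symmetric] by (cases "q = 0") (simp_all add: mult_le_cancel_left_pos)
qed

lemma automorphism_image_proj_idempotent:
  assumes "uroe_automorphism \<sigma>"
  shows "\<sigma> (proj B) = mmul (madj (\<sigma> (proj B))) (\<sigma> (proj (B::'a::metric_space set)))"
proof -
  have "\<sigma> (proj B) = \<sigma> (mmul (madj (proj B)) (proj B))"
    by (simp add: madj_proj mmul_proj_proj)
  also have "\<dots> = mmul (\<sigma> (madj (proj B))) (\<sigma> (proj B))"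
    using assms uroe.adj[OF proj_uroe] proj_uroe unfolding uroe_automorphism_def by blast
  also have "\<sigma> (madj (proj B)) = madj (\<sigma> (proj B))"
    using assms proj_uroe unfolding uroe_automorphism_def by blast
  finally show ?thesis .
qed

definition proj_weight :: "('a mat \<Rightarrow> 'a mat) \<Rightarrow> 'a \<Rightarrow> 'a set \<Rightarrow> real" where
  "proj_weight \<sigma> y B = (l2norm (\<lambda>z. \<sigma> (proj B) z y))^2"

lemma diag_proj_weight:
  "uroe_automorphism \<sigma> \<Longrightarrow> \<sigma> (proj B) y y = complex_of_real (proj_weight \<sigma> y (B::'a::metric_space set))"
  unfolding proj_weight_def by (rule diag_self_adjoint_idempotent[OF automorphism_image_proj_idempotent])

lemma proj_weight_le_1: "uroe_automorphism \<sigma> \<Longrightarrow> proj_weight \<sigma> y (B::'a::metric_space set) \<le> 1"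
  unfolding proj_weight_def by (rule self_adjoint_idempotent_col_le_1[OF automorphism_image_proj_idempotent])

lemma proj_weight_Un:
  assumes "uroe_automorphism \<sigma>" and "A \<inter> B = {}"
  shows "proj_weight \<sigma> y (A \<union> B) = proj_weight \<sigma> y A + proj_weight \<sigma> y (B::'a::metric_space set)"
proof -
  have "\<sigma> (proj (A \<union> B)) = madd (\<sigma> (proj A)) (\<sigma> (proj B))"
    using assms proj_uroe unfolding proj_Un[OF assms(2)] uroe_automorphism_def by blast
  then have "\<sigma> (proj (A \<union> B)) y y = \<sigma> (proj A) y y + \<sigma> (proj B) y y"
    by (simp add: madd_def)
  then show ?thesis
    unfolding diag_proj_weight[OF assms(1)] by (metis of_real_add of_real_eq_iff)
qed

lemma proj_weight_mono:
  assumes "uroe_automorphism \<sigma>" and "B \<subseteq> A"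
  shows "proj_weight \<sigma> y B \<le> proj_weight \<sigma> y (A::'a::metric_space set)"
proof -
  have "proj_weight \<sigma> y A = proj_weight \<sigma> y B + proj_weight \<sigma> y (A - B)"
    using proj_weight_Un[OF assms(1), of B "A - B" y] assms(2) by (simp add: Un_absorb1)
  then show ?thesis by (simp add: proj_weight_def)
qed

lemma proj_weight_sum:
  assumes "uroe_automorphism \<sigma>" and "finite F"
  shows "(\<Sum>x\<in>F. proj_weight \<sigma> y {x}) = proj_weight \<sigma> y (F::'a::metric_space set)"
  using assms(2)
proof (induction F rule: finite_induct)
  case empty
  show ?case using proj_weight_Un[OF assms(1), of "{}" "{}" y] by simp
next
  case (insert x F)
  then show ?case
    using proj_weight_Un[OF assms(1), of "{x}" F y] by (simp add: insert_is_Un[symmetric])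
qed

lemma diag_conj_proj:
  "mmul (mmul u (proj A)) (madj u) y y
    = complex_of_real (infsum (\<lambda>w. if w \<in> A then (cmod (u y w))^2 else 0) UNIV)"
proof -
  have up: "mmul u (proj A) y w = (if w \<in> A then u y w else 0)" for w
    unfolding mmul_def by (subst infsum_finite_support[of "{w}"]) (auto simp: proj_def)
  have "mmul (mmul u (proj A)) (madj u) y y = infsum (\<lambda>w. mmul u (proj A) y w * madj u w y) UNIV"
    by (simp add: mmul_def)
  also have "\<dots> = infsum (\<lambda>w. complex_of_real (if w \<in> A then (cmod (u y w))^2 else 0)) UNIV"
    by (intro infsum_cong) (simp add: up madj_def complex_norm_square[symmetric])
  finally show ?thesis
    by (simp only: infsum_complex_of_real)
qed

lemma proj_weight_singleton:
  "proj_weight \<sigma> y {x} = (l2norm (\<lambda>z. \<sigma> (exx x) z y))^2"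
proof -
  have "exx x = proj {x}"
    unfolding exx_def proj_def by (intro ext) auto
  then show ?thesis by (simp add: proj_weight_def)
qed

lemma proj_weight_conj:
  assumes "uroe_automorphism \<sigma>" and "\<sigma> (proj A) = mmul (mmul u (proj A)) (madj u)"
  shows "proj_weight \<sigma> y (A::'a::metric_space set)
    = infsum (\<lambda>w. if w \<in> A then (cmod (u y w))^2 else 0) UNIV"
  using diag_proj_weight[OF assms(1), of A y] diag_conj_proj[of u A y] assms(2) by simp

lemma finite_fibres:
  assumes aut: "uroe_automorphism \<sigma>" and "\<epsilon> > 0"
    and weight: "\<And>x. \<epsilon>^2 \<le> proj_weight \<sigma> (f x) {x}"
  shows "finite (f -` {p :: 'a::metric_space})"
proof -
  have "card G \<le> nat \<lceil>1 / \<epsilon>^2\<rceil>" if "G \<subseteq> f -` {p}" and "finite G" for G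
  proof -
    have "card G * \<epsilon>^2 = (\<Sum>x\<in>G. \<epsilon>^2)" by simp
    also have "\<dots> \<le> (\<Sum>x\<in>G. proj_weight \<sigma> p {x})"
      using weight that(1) by (intro sum_mono) force
    also have "\<dots> = proj_weight \<sigma> p G"
      using aut that(2) by (rule proj_weight_sum)
    also have "\<dots> \<le> 1"
      using aut by (rule proj_weight_le_1)
    finally have "card G \<le> 1 / \<epsilon>^2"
      using \<open>\<epsilon> > 0\<close> by (simp add: field_simps)
    then show ?thesis by linarith
  qed
  then show ?thesis by (metis finite_if_finite_subsets_card_bdd)
qed

section \<open>A set pushed away from itself by an unbounded map\<close>

lemma unif_locally_finite_finite_cball:
  assumes "unif_locally_finite TYPE('a::metric_space)"
  shows "finite (cball (x::'a) r)"
proof -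
  have "finite (cball x (max r 1))"
    using assms unfolding unif_locally_finite_def by (metis max.strict_coboundedI2 zero_less_one)
  then show ?thesis
    by (rule finite_subset[rotated]) auto
qed

primrec chosen_prefix :: "(nat \<Rightarrow> 'a set \<Rightarrow> 'a \<Rightarrow> bool) \<Rightarrow> nat \<Rightarrow> 'a set" where
  "chosen_prefix Q 0 = {}"
| "chosen_prefix Q (Suc n) = insert (SOME x. Q n (chosen_prefix Q n) x) (chosen_prefix Q n)"

lemma sequence_with_finite_history:
  fixes Q :: "nat \<Rightarrow> 'a set \<Rightarrow> 'a \<Rightarrow> bool"
  assumes "\<And>n P. finite P \<Longrightarrow> \<exists>x. Q n P x"
  shows "\<exists>xs. \<forall>n. Q n (xs ` {..<n}) (xs n)"
proof -
  define xs where "xs n = (SOME x. Q n (chosen_prefix Q n) x)" for n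
  have prefix: "chosen_prefix Q n = xs ` {..<n}" for n
    by (induction n) (simp_all add: xs_def lessThan_Suc)
  have "Q n (chosen_prefix Q n) (xs n)" for n
    unfolding xs_def by (rule someI_ex, rule assms) (simp add: prefix)
  then show ?thesis
    by (auto simp: prefix)
qed

lemma far_point_exists:
  fixes f :: "'a::metric_space \<Rightarrow> 'a"
  assumes unbounded: "\<And>C. \<exists>x. C < dist x (f x)"
    and fibres: "\<And>p. finite (f -` {p})" and balls: "\<And>(x::'a) r. finite (cball x r)"
    and "finite P"
  shows "\<exists>x. r < dist x (f x) \<and> (\<forall>m\<in>P. r < dist (f m) x \<and> r < dist m (f x))"
proof -
  define far where "far = {x. r < dist x (f x)}"
  have "infinite far"
  proof
    assume "finite far"
    obtain x where x: "Max (insert r ((\<lambda>x. dist x (f x)) ` far)) < dist x (f x)"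
      using unbounded by blast
    then have "x \<in> far"
      using \<open>finite far\<close> by (simp add: far_def)
    with x \<open>finite far\<close> show False by auto
  qed
  define E where "E = (\<Union>m\<in>P. cball (f m) r) \<union> (\<Union>m\<in>P. \<Union>p\<in>cball m r. f -` {p})"
  have "finite E"
    unfolding E_def by (intro finite_UnI finite_UN_I \<open>finite P\<close> balls fibres)
  with \<open>infinite far\<close> obtain x where "x \<in> far" and "x \<notin> E"
    by (metis Diff_infinite_finite ex_in_conv finite.emptyI infinite_imp_nonempty Diff_iff)
  then show ?thesis
    by (auto simp: far_def E_def not_le)
qed

lemma exists_set_far_from_own_image:
  fixes f :: "'a::metric_space \<Rightarrow> 'a"
  assumes "\<And>C. \<exists>x. C < dist x (f x)"
    and "\<And>p. finite (f -` {p})" and "\<And>(x::'a) r. finite (cball x r)"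
  shows "\<exists>A. \<forall>r. \<exists>x\<in>A. \<forall>w\<in>A. r < dist (f x) w"
proof -
  have "\<exists>xs. \<forall>n. real n < dist (xs n) (f (xs n)) \<and>
      (\<forall>m\<in>xs ` {..<n}. real n < dist (f m) (xs n) \<and> real n < dist m (f (xs n)))"
    using far_point_exists[OF assms] by (rule sequence_with_finite_history)
  then obtain xs where xs: "\<And>n. real n < dist (xs n) (f (xs n)) \<and>
      (\<forall>m\<in>xs ` {..<n}. real n < dist (f m) (xs n) \<and> real n < dist m (f (xs n)))"
    by blast
  have "\<exists>x\<in>range xs. \<forall>w\<in>range xs. r < dist (f x) w" for r
  proof (intro bexI ballI)
    define n where "n = nat \<lceil>r\<rceil> + 1"
    have "r < real n" unfolding n_def by linarith
    fix w assume "w \<in> range xs"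
    then obtain m where w: "w = xs m" by blast
    consider "m = n" | "m < n" | "n < m" by linarith
    then show "r < dist (f (xs n)) w"
    proof cases
      case 1
      then show ?thesis using xs[of n] \<open>r < real n\<close> w by (simp add: dist_commute)
    next
      case 2
      then show ?thesis using xs[of n] \<open>r < real n\<close> w by (force simp: dist_commute)
    next
      case 3
      then show ?thesis using xs[of m] \<open>r < real n\<close> w by force
    qed
  qed simp
  then show ?thesis by blast
qed

theorem proposition6p1p9:
  fixes \<sigma> :: "('a::metric_space) mat \<Rightarrow> 'a mat" and f :: "'a \<Rightarrow> 'a"
  assumes "unif_locally_finite TYPE('a)"
    and "uroe_automorphism \<sigma>"
    and "\<exists>\<epsilon>>0. \<forall>x. l2norm (\<lambda>z. \<sigma> (exx x) z (f x)) \<ge> \<epsilon>"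
    and "\<forall>A. \<exists>u\<in>uroe. unitary u \<and> \<sigma> (proj A) = mmul (mmul u (proj A)) (madj u)"
  shows "\<exists>C. \<forall>x. dist x (f x) \<le> C"
proof (rule ccontr)
  assume "\<nexists>C. \<forall>x. dist x (f x) \<le> C"
  then have unbounded: "\<exists>x. C < dist x (f x)" for C by (meson not_le)
  obtain \<epsilon> where "\<epsilon> > 0" and \<epsilon>: "\<And>x. l2norm (\<lambda>z. \<sigma> (exx x) z (f x)) \<ge> \<epsilon>"
    using assms(3) by blast
  have weight: "\<epsilon>^2 \<le> proj_weight \<sigma> (f x) {x}" for x
    unfolding proj_weight_singleton using \<epsilon>[of x] \<open>\<epsilon> > 0\<close> by (intro power_mono) auto
  obtain A where A: "\<And>r. \<exists>x\<in>A. \<forall>w\<in>A. r < dist (f x) w"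
    using exists_set_far_from_own_image[OF unbounded finite_fibres[OF assms(2) \<open>\<epsilon> > 0\<close> weight]
        unif_locally_finite_finite_cball[OF assms(1)]] by blast
  obtain u where "u \<in> uroe" and conj: "\<sigma> (proj A) = mmul (mmul u (proj A)) (madj u)"
    using assms(4) by blast
  have "row_decay u"
    using uroe_decaying_matrix[OF assms(1) \<open>u \<in> uroe\<close>] unfolding decaying_matrix_def by blast
  then obtain r where r: "\<And>y B. \<forall>w\<in>B. r < dist y w \<Longrightarrow>
      infsum (\<lambda>w. if w \<in> B then (cmod (u y w))^2 else 0) UNIV \<le> \<epsilon>^2 / 2"
    using row_decay_infsum[of u "\<epsilon>^2 / 2"] \<open>\<epsilon> > 0\<close> by auto
  obtain x where "x \<in> A" and far: "\<forall>w\<in>A. r < dist (f x) w"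
    using A by blast
  have "\<epsilon>^2 \<le> proj_weight \<sigma> (f x) A"
    using weight[of x] proj_weight_mono[OF assms(2), of "{x}" A "f x"] \<open>x \<in> A\<close> by simp
  also have "\<dots> = infsum (\<lambda>w. if w \<in> A then (cmod (u (f x) w))^2 else 0) UNIV"
    using assms(2) conj by (rule proj_weight_conj)
  also have "\<dots> \<le> \<epsilon>^2 / 2"
    using far by (rule r)
  finally show False
    using \<open>\<epsilon> > 0\<close> by simp
qed

end
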